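(* Let $\rho$, $\varepsilon$, $q,\delta$ and $(\sigma,\gamma)$ be as in the context. Let $G\sim N(0,1)$, and for $\eta\in[-1,1]$ let $\tilde G$ be such that $(G,\tilde G)\sim N\big(0_2,\begin{pmatrix}1&\eta\\ \eta&1\end{pmatrix}\big)$ and $(G,\tilde G)$ is independent of $\varepsilon$. Define $$F(\eta)= q\,\frac{\mathbb E\big[\big(\sigma G-\mathrm{prox}_{\gamma\rho_\varepsilon}(\sigma G)\big)\big(\sigma \tilde G-\mathrm{prox}_{\gamma\rho_\varepsilon}(\sigma \tilde G)\big)\big]}{\mathbb E\big[\big(\sigma G-\mathrm{prox}_{\gamma\rho_\varepsilon}(\sigma G)\big)^2\big]},\qquad \eta\in[-1,1].$$ Then $F$ is non-decreasing and $q$-Lipschitz on $[-1,1]$, with $0\le F(0)\le q\le 1$ and $F(1)=q$. The equation $\eta=F(\eta)$ has a unique solution in $[-1,1]$, and this solution lies in $[0,q]$. (Equivalently, by the first equation of the system defining $(\sigma,\gamma)$, $\eta=\frac{q^2\delta}{\sigma^2}\mathbb E[(\sigma G-\mathrm{prox}_{\gamma\rho_\varepsilon}(\sigma G))(\sigma \tilde G-\mathrm{prox}_{\gamma\rho_\varepsilon}(\sigma\tilde G))]$ has a unique solution, lying in $[0,q]$.)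
   Context: Constants $q\in(0,1)$, $\delta>1$ with $q\delta>1$. $\rho:\mathbb R\to\mathbb R$ is twice continuously differentiable, $\arg\min_x\rho(x)=\{0\}$, $|\rho'(t)|\le1$ and $0<\rho''(t)\le 1$ for all $t$. $\varepsilon$ is a real random variable with $\mathbb P(\varepsilon\neq0)>0$. For $e\in\mathbb R$ write $\rho_e(u)=\rho(e-u)$. For a convex $f:\mathbb R\to\mathbb R$, $\mathrm{prox}_f(x_0)=\arg\min_{x\in\mathbb R}\{(x_0-x)^2/2+f(x)\}$. The pair $(\sigma,\gamma)$ with $\sigma>0,\gamma>0$ is the (unique) solution of the system $$\frac{\sigma^2}{q\delta}=\mathbb E\big[(\sigma G-\mathrm{prox}_{\gamma\rho_\varepsilon}(\sigma G))^2\big],\qquad 1-\frac1{q\delta}=\sigma^{-1}\mathbb E\big[G\,\mathrm{prox}_{\gamma\rho_\varepsilon}(\sigma G)\big],$$ where $G\sim N(0,1)$ is independent of $\varepsilon$. *)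

theory Defs
  imports "HOL-Probability.Probability"
begin

definition prox :: "(real \<Rightarrow> real) \<Rightarrow> real \<Rightarrow> real" where
  "prox f x0 = (THE x. \<forall>y. (x0 - x)\<^sup>2 / 2 + f x \<le> (x0 - y)\<^sup>2 / 2 + f y)"

definition rho_e :: "(real \<Rightarrow> real) \<Rightarrow> real \<Rightarrow> real \<Rightarrow> real" where
  "rho_e \<rho> e u = \<rho> (e - u)"

definition stdN :: "real measure" where
  "stdN = density lborel std_normal_density"

definition resid :: "(real \<Rightarrow> real) \<Rightarrow> real \<Rightarrow> real \<Rightarrow> real \<Rightarrow> real" where
  "resid \<rho> \<gamma> e x = x - prox (\<lambda>u. \<gamma> * rho_e \<rho> e u) x"

text \<open>The law of eps is Pe.  The pair (G, Gt) with correlation eta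
  is realised as (G, eta*G + sqrt(1-eta^2)*Z) with G, Z iid N(0,1), independent of eps;
  this has exactly the required joint law N(0, [[1,eta],[eta,1]]) x law(eps).\<close>
definition Ffun :: "real measure \<Rightarrow> (real \<Rightarrow> real) \<Rightarrow> real \<Rightarrow> real \<Rightarrow> real \<Rightarrow> real \<Rightarrow> real" where
  "Ffun Pe \<rho> q \<sigma> \<gamma> \<eta> =
     q * (\<integral>w. (case w of (g, z, e) \<Rightarrow>
              resid \<rho> \<gamma> e (\<sigma> * g) * resid \<rho> \<gamma> e (\<sigma> * (\<eta> * g + sqrt (1 - \<eta>\<^sup>2) * z)))
           \<partial>(stdN \<Otimes>\<^sub>M (stdN \<Otimes>\<^sub>M Pe)))
       / (\<integral>w. (case w of (g, e) \<Rightarrow> (resid \<rho> \<gamma> e (\<sigma> * g))\<^sup>2) \<partial>(stdN \<Otimes>\<^sub>M Pe))"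

definition sys_holds :: "real measure \<Rightarrow> (real \<Rightarrow> real) \<Rightarrow> real \<Rightarrow> real \<Rightarrow> real \<Rightarrow> real \<Rightarrow> bool" where
  "sys_holds Pe \<rho> q \<delta> \<sigma> \<gamma> \<longleftrightarrow>
     \<sigma>\<^sup>2 / (q * \<delta>) = (\<integral>w. (case w of (g, e) \<Rightarrow> (resid \<rho> \<gamma> e (\<sigma> * g))\<^sup>2) \<partial>(stdN \<Otimes>\<^sub>M Pe))
   \<and> 1 - 1 / (q * \<delta>) = (1 / \<sigma>) * (\<integral>w. (case w of (g, e) \<Rightarrow>
        g * prox (\<lambda>u. \<gamma> * rho_e \<rho> e u) (\<sigma> * g)) \<partial>(stdN \<Otimes>\<^sub>M Pe))"

end

theory Submission
  imports Defs
begin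

text \<open>Write \<open>r\<^sub>e(x) = x - prox\<^bsub>\<gamma>\<rho>\<^sub>e\<^esub>(x)\<close>. Realise the correlated pair as \<open>G\<close> and
  \<open>cos t G + sin t Z\<close> with \<open>\<eta> = cos t\<close>. For \<open>f = r\<^sub>e(\<sigma> \<cdot>)\<close>, which is bounded with
  \<open>0 \<le> f' \<le> \<sigma>\<close>, rotation invariance of \<open>(G, Z)\<close> and Stein's lemma give
  \<open>d/dt E[f(G) f(cos t G + sin t Z)] = -sin t E[f'(G) f'(cos t G + sin t Z)]\<close>, and the last
  expectation lies between \<open>0\<close> and \<open>E[f'(G)\<^sup>2] \<le> \<sigma> E[f'(G)] = \<sigma> E[G f(G)]\<close>.
  Averaged over \<open>\<epsilon>\<close>, the two equations of the system turn \<open>\<sigma> E[G r(\<sigma>G)]\<close> into the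
  denominator \<open>E[r(\<sigma>G)\<^sup>2]\<close> of \<open>F\<close>. Hence the numerator of \<open>F\<close> is nondecreasing in \<open>\<eta>\<close>
  with slope at most the denominator, so \<open>F\<close> is nondecreasing and \<open>q\<close>-Lipschitz. Moreover
  \<open>F(1) = q\<close> and \<open>F(0) = q E\<^sub>\<epsilon>[(E\<^sub>G r\<^sub>\<epsilon>(\<sigma>G))\<^sup>2] / E[r\<^sub>\<epsilon>(\<sigma>G)\<^sup>2] \<ge> 0\<close>, and a \<open>q\<close>-contraction of
  \<open>[-1, 1]\<close> with these values has a unique fixed point, which lies in \<open>[0, q]\<close>.\<close>

section \<open>The standard Gaussian measure\<close>

lemma sets_stdN[measurable_cong, simp]: "sets stdN = sets borel"
  by (simp add: stdN_def)

lemma space_stdN[simp]: "space stdN = UNIV"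
  by (simp add: stdN_def)

lemma prob_space_stdN: "prob_space stdN"
  unfolding stdN_def using prob_space_normal_density[of 1 0] by simp

interpretation stdN: prob_space stdN by (rule prob_space_stdN)

lemma integral_stdN:
  fixes g :: "real \<Rightarrow> real"
  assumes "g \<in> borel_measurable borel"
  shows "integral\<^sup>L stdN g = (\<integral>x. std_normal_density x * g x \<partial>lborel)"
  unfolding stdN_def using assms
  by (subst integral_density) (auto simp: normal_density_nonneg)

lemma integrable_stdN:
  fixes g :: "real \<Rightarrow> real"
  assumes "g \<in> borel_measurable borel"
  shows "integrable stdN g \<longleftrightarrow> integrable lborel (\<lambda>x. std_normal_density x * g x)"
  unfolding stdN_def using assms
  by (subst integrable_density) (auto simp: normal_density_nonneg)

lemma integrable_stdN_abs: "integrable stdN (\<lambda>x. \<bar>x\<bar>)"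
  using integrable_std_normal_moment_abs[of 1] by (subst integrable_stdN) auto

lemma integrable_stdN_power2: "integrable stdN (\<lambda>x. x\<^sup>2)"
  using integrable_std_normal_moment[of 2] by (subst integrable_stdN) auto

lemma integral_stdN_power2: "(\<integral>x. x\<^sup>2 \<partial>stdN) = 1"
  using std_normal_moment_even[of 1]
  by (subst integral_stdN) (auto dest: has_bochner_integral_integral_eq)

lemma std_normal_density_has_real_derivative:
  "(std_normal_density has_real_derivative (- x * std_normal_density x)) (at x)"
  unfolding std_normal_density_def
  by (auto intro!: derivative_eq_intros simp: power2_eq_square field_simps)

lemma tendsto_std_normal_density_at_top: "(std_normal_density \<longlongrightarrow> 0) at_top"
  unfolding std_normal_density_def by real_asymp

lemma tendsto_std_normal_density_at_bot: "(std_normal_density \<longlongrightarrow> 0) at_bot"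
  unfolding std_normal_density_def by real_asymp

lemma tendsto_bounded_times_std_normal_density:
  fixes h :: "real \<Rightarrow> real"
  assumes hb: "\<And>x. \<bar>h x\<bar> \<le> B" and F: "F = at_top \<or> F = at_bot"
  shows "((\<lambda>x. h x * std_normal_density x) \<longlongrightarrow> 0) F"
proof (rule Lim_null_comparison)
  show "\<forall>\<^sub>F x in F. norm (h x * std_normal_density x) \<le> B * std_normal_density x"
    using hb by (intro always_eventually allI)
      (auto simp: abs_mult normal_density_nonneg intro!: mult_right_mono)
  show "((\<lambda>x. B * std_normal_density x) \<longlongrightarrow> 0) F"
    using F tendsto_mult_left[OF tendsto_std_normal_density_at_top, of B]
      tendsto_mult_left[OF tendsto_std_normal_density_at_bot, of B] by auto
qed

lemma integrable_std_normal_density_mult_bounded: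
  fixes g :: "real \<Rightarrow> real"
  assumes [measurable]: "g \<in> borel_measurable borel" and g: "\<And>x. \<bar>g x\<bar> \<le> C"
  shows "integrable lborel (\<lambda>x. std_normal_density x * g x)"
proof (rule Bochner_Integration.integrable_bound[where f="\<lambda>x. C * std_normal_density x"])
  show "AE x in lborel. norm (std_normal_density x * g x) \<le> norm (C * std_normal_density x)"
  proof (intro AE_I2)
    fix x
    have "std_normal_density x * \<bar>g x\<bar> \<le> std_normal_density x * \<bar>C\<bar>"
      using g[of x] by (intro mult_left_mono) (auto simp: normal_density_nonneg)
    then show "norm (std_normal_density x * g x) \<le> norm (C * std_normal_density x)"
      by (simp add: abs_mult normal_density_nonneg mult.commute)
  qed
qed simp_all

lemma integrable_std_normal_density_mult_linear:
  fixes h :: "real \<Rightarrow> real"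
  assumes [measurable]: "h \<in> borel_measurable borel" and hb: "\<And>x. \<bar>h x\<bar> \<le> B"
  shows "integrable lborel (\<lambda>x. std_normal_density x * (x * h x))"
proof (rule Bochner_Integration.integrable_bound[where f="\<lambda>x. B * (std_normal_density x * \<bar>x\<bar>^1)"])
  show "integrable lborel (\<lambda>x. B * (std_normal_density x * \<bar>x\<bar>^1))"
    using integrable_std_normal_moment_abs[of 1] by simp
  show "AE x in lborel. norm (std_normal_density x * (x * h x)) \<le> norm (B * (std_normal_density x * \<bar>x\<bar>^1))"
  proof (intro AE_I2)
    fix x
    have "std_normal_density x * \<bar>x\<bar> * \<bar>h x\<bar> \<le> std_normal_density x * \<bar>x\<bar> * \<bar>B\<bar>"
      using hb[of x] by (intro mult_left_mono) (auto simp: normal_density_nonneg)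
    then show "norm (std_normal_density x * (x * h x)) \<le> norm (B * (std_normal_density x * \<bar>x\<bar>^1))"
      by (simp add: abs_mult normal_density_nonneg mult.commute mult.left_commute)
  qed
qed simp

text \<open>Stein's lemma \<open>E[G h(G)] = E[h'(G)]\<close>: integrate \<open>(h \<phi>)' = h' \<phi> - x h \<phi>\<close> over the line.\<close>

lemma stein_lemma:
  fixes h h' :: "real \<Rightarrow> real"
  assumes d: "\<And>x. (h has_real_derivative h' x) (at x)"
    and c: "continuous_on UNIV h'"
    and hb: "\<And>x. \<bar>h x\<bar> \<le> B" and h'b: "\<And>x. \<bar>h' x\<bar> \<le> C"
  shows "integrable stdN (\<lambda>x. x * h x)" "integrable stdN h'"
    "(\<integral>x. x * h x \<partial>stdN) = (\<integral>x. h' x \<partial>stdN)"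
proof -
  have hcont: "continuous_on UNIV h"
    using d by (meson DERIV_isCont continuous_at_imp_continuous_on)
  have [measurable]: "h \<in> borel_measurable borel" "h' \<in> borel_measurable borel"
    using hcont c by (auto intro: borel_measurable_continuous_onI)
  have i1: "integrable lborel (\<lambda>x. std_normal_density x * h' x)"
    by (rule integrable_std_normal_density_mult_bounded[OF _ h'b]) measurable
  have i2: "integrable lborel (\<lambda>x. std_normal_density x * (x * h x))"
    by (rule integrable_std_normal_density_mult_linear[OF _ hb]) measurable
  show "integrable stdN (\<lambda>x. x * h x)" using i2 by (subst integrable_stdN) auto
  show "integrable stdN h'" using i1 by (subst integrable_stdN) auto
  define f where "f x = std_normal_density x * h' x - std_normal_density x * (x * h x)" for x
  have "(LBINT x=-\<infinity>..\<infinity>. f x) = 0 - 0"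
  proof (rule interval_integral_FTC_integrable[where F="\<lambda>x. h x * std_normal_density x"])
    show "((\<lambda>x. h x * std_normal_density x) has_vector_derivative f x) (at x)" for x
      unfolding f_def has_real_derivative_iff_has_vector_derivative[symmetric]
      by (rule derivative_eq_intros d std_normal_density_has_real_derivative refl)+
        (simp add: algebra_simps)
    show "isCont f x" for x
      unfolding f_def using c hcont
      by (intro continuous_intros) (auto simp: continuous_on_eq_continuous_at normal_density_def)
    show "set_integrable lborel (einterval (-\<infinity>) \<infinity>) f"
      unfolding f_def set_integrable_def using i1 i2 by simp
    show "(((\<lambda>x. h x * std_normal_density x) \<circ> real_of_ereal) \<longlongrightarrow> 0) (at_left \<infinity>)"
      "(((\<lambda>x. h x * std_normal_density x) \<circ> real_of_ereal) \<longlongrightarrow> 0) (at_right (-\<infinity>))"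
      using tendsto_bounded_times_std_normal_density[OF hb] by (auto simp: ereal_tendsto_simps1)
  qed simp
  then show "(\<integral>x. x * h x \<partial>stdN) = (\<integral>x. h' x \<partial>stdN)"
    using i1 i2 by (simp add: integral_stdN f_def interval_lebesgue_integral_def set_lebesgue_integral_def)
qed

lemma stein_lemma_affine:
  fixes h h' :: "real \<Rightarrow> real"
  assumes d: "\<And>x. (h has_real_derivative h' x) (at x)" and c: "continuous_on UNIV h'"
    and hb: "\<And>x. \<bar>h x\<bar> \<le> B" and h'b: "\<And>x. \<bar>h' x\<bar> \<le> C" and s: "0 < s"
  shows "(\<integral>w. w * h (a + s * w) \<partial>stdN) = s * (\<integral>w. h' (a + s * w) \<partial>stdN)"
proof -
  have "((\<lambda>w. h (a + s * w)) has_real_derivative h' (a + s * w) * s) (at w)" for w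
  proof -
    have "((\<lambda>w. a + s * w) has_real_derivative s) (at w)" by (auto intro!: derivative_eq_intros)
    from DERIV_chain2[OF d this] show ?thesis by simp
  qed
  moreover have "continuous_on UNIV (\<lambda>w. h' (a + s * w) * s)"
    by (intro continuous_intros continuous_on_compose2[OF c]) auto
  ultimately have "(\<integral>w. w * h (a + s * w) \<partial>stdN) = (\<integral>w. h' (a + s * w) * s \<partial>stdN)"
    by (rule stein_lemma(3)[where C="C * s"]) (use hb h'b s in \<open>auto simp: abs_mult intro: mult_right_mono\<close>)
  then show ?thesis by simp
qed

section \<open>Rotation invariance of the planar Gaussian\<close>

abbreviation N2 :: "(real \<times> real) measure" where "N2 \<equiv> stdN \<Otimes>\<^sub>M stdN"

lemma sets_N2[measurable_cong]: "sets N2 = sets (borel \<Otimes>\<^sub>M borel)"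
  by (intro sets_pair_measure_cong) simp_all

interpretation N2: pair_prob_space stdN stdN
  by (simp add: pair_prob_space_def pair_sigma_finite_def prob_space_stdN prob_space_imp_sigma_finite)

lemma std_normal_density_rotation:
  fixes c s g x :: real
  assumes cs: "c\<^sup>2 + s\<^sup>2 = 1" and s: "s > 0"
  shows "std_normal_density g * std_normal_density ((x - c * g) / s) =
         std_normal_density x * std_normal_density ((g - c * x) / s)"
proof -
  have "s\<^sup>2 = 1 - c\<^sup>2" using cs by simp
  have "g\<^sup>2 * s\<^sup>2 + (x - c * g)\<^sup>2 = x\<^sup>2 * s\<^sup>2 + (g - c * x)\<^sup>2"
    unfolding \<open>s\<^sup>2 = 1 - c\<^sup>2\<close> by (simp add: power2_eq_square algebra_simps)
  then have "- g\<^sup>2 / 2 + - ((x - c * g) / s)\<^sup>2 / 2 = - x\<^sup>2 / 2 + - ((g - c * x) / s)\<^sup>2 / 2"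
    using s by (simp add: power_divide field_simps)
  then show ?thesis
    unfolding std_normal_density_def by (simp add: exp_add[symmetric])
qed

lemma nn_integral_std_normal_affine:
  fixes H :: "real \<Rightarrow> ennreal"
  assumes [measurable]: "H \<in> borel_measurable borel" and s: "s > 0"
  shows "(\<integral>\<^sup>+z. ennreal (std_normal_density z) * H (t + s * z) \<partial>lborel)
       = (\<integral>\<^sup>+x. ennreal (std_normal_density ((x - t) / s) / s) * H x \<partial>lborel)"
proof -
  have "(\<integral>\<^sup>+x. ennreal (std_normal_density ((x - t) / s) / s) * H x \<partial>lborel)
     = ennreal \<bar>s\<bar> * (\<integral>\<^sup>+z. ennreal (std_normal_density ((t + s * z - t) / s) / s) * H (t + s * z) \<partial>lborel)"
    using s by (intro nn_integral_real_affine) auto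
  also have "\<dots> = (\<integral>\<^sup>+z. ennreal s * (ennreal (std_normal_density z / s) * H (t + s * z)) \<partial>lborel)"
    using s by (subst nn_integral_cmult) auto
  also have "\<dots> = (\<integral>\<^sup>+z. ennreal (std_normal_density z) * H (t + s * z) \<partial>lborel)"
  proof (intro nn_integral_cong)
    fix z
    have "ennreal s * ennreal (std_normal_density z / s) = ennreal (std_normal_density z)"
      using s by (subst ennreal_mult[symmetric]) (auto simp: normal_density_nonneg)
    then show "ennreal s * (ennreal (std_normal_density z / s) * H (t + s * z)) =
         ennreal (std_normal_density z) * H (t + s * z)"
      by (simp add: mult.assoc[symmetric])
  qed
  finally show ?thesis by simp
qed

text \<open>If \<open>c\<^sup>2 + s\<^sup>2 = 1\<close>, the pairs \<open>(G, cG + sZ)\<close> and \<open>(cG + sZ, G)\<close> have the same law: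
  both have the joint density \<open>K\<close> below.\<close>

lemma nn_integral_N2_rotation:
  fixes H :: "real \<times> real \<Rightarrow> ennreal"
  assumes [measurable]: "H \<in> borel_measurable (borel \<Otimes>\<^sub>M borel)"
    and cs: "c\<^sup>2 + s\<^sup>2 = 1" and s: "s > 0"
  shows "(\<integral>\<^sup>+w. H (fst w, c * fst w + s * snd w) \<partial>N2) = (\<integral>\<^sup>+w. H (c * fst w + s * snd w, fst w) \<partial>N2)"
proof -
  have [simp]: "0 \<le> std_normal_density y / s" for y using s by (simp add: normal_density_nonneg)
  define K where "K g x = ennreal (std_normal_density g * (std_normal_density ((x - c * g) / s) / s)) * H (g, x)" for g x
  have [measurable]: "case_prod K \<in> borel_measurable (lborel \<Otimes>\<^sub>M lborel)"
    "(\<lambda>y. H (g, y)) \<in> borel_measurable borel" "(\<lambda>y. H (y, g)) \<in> borel_measurable borel" for g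
    unfolding K_def by measurable
  have A1: "(\<integral>\<^sup>+z. ennreal (std_normal_density z) * H (g, c * g + s * z) \<partial>lborel)
      = (\<integral>\<^sup>+x. ennreal (std_normal_density ((x - c * g) / s) / s) * H (g, x) \<partial>lborel)"
    and A2: "(\<integral>\<^sup>+z. ennreal (std_normal_density z) * H (c * g + s * z, g) \<partial>lborel)
      = (\<integral>\<^sup>+x. ennreal (std_normal_density ((x - c * g) / s) / s) * H (x, g) \<partial>lborel)" for g
    by (rule nn_integral_std_normal_affine[OF _ s], measurable)+
  have "(\<integral>\<^sup>+w. H (fst w, c * fst w + s * snd w) \<partial>N2) = (\<integral>\<^sup>+g. \<integral>\<^sup>+z. H (g, c * g + s * z) \<partial>stdN \<partial>stdN)"
    by (subst stdN.nn_integral_fst[symmetric]) auto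
  also have "\<dots> = (\<integral>\<^sup>+g. ennreal (std_normal_density g) *
      \<integral>\<^sup>+x. ennreal (std_normal_density ((x - c * g) / s) / s) * H (g, x) \<partial>lborel \<partial>lborel)"
    unfolding stdN_def by (subst nn_integral_density, measurable)+ (simp add: A1 A2)
  also have "\<dots> = (\<integral>\<^sup>+g. \<integral>\<^sup>+x. K g x \<partial>lborel \<partial>lborel)"
    unfolding K_def by (intro nn_integral_cong, subst nn_integral_cmult[symmetric])
      (auto simp: mult.assoc[symmetric] ennreal_mult[symmetric] normal_density_nonneg s)
  also have "\<dots> = (\<integral>\<^sup>+x. \<integral>\<^sup>+g. K g x \<partial>lborel \<partial>lborel)"
    by (rule lborel_pair.Fubini') measurable
  also have "\<dots> = (\<integral>\<^sup>+x. ennreal (std_normal_density x) *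
      \<integral>\<^sup>+g. ennreal (std_normal_density ((g - c * x) / s) / s) * H (g, x) \<partial>lborel \<partial>lborel)"
    unfolding K_def by (intro nn_integral_cong, subst nn_integral_cmult[symmetric])
      (auto simp: mult.assoc[symmetric] ennreal_mult[symmetric] normal_density_nonneg s std_normal_density_rotation[OF cs s])
  also have "\<dots> = (\<integral>\<^sup>+x. \<integral>\<^sup>+w. H (c * x + s * w, x) \<partial>stdN \<partial>stdN)"
    unfolding stdN_def by (subst nn_integral_density, measurable)+ (simp add: A1 A2)
  also have "\<dots> = (\<integral>\<^sup>+w. H (c * fst w + s * snd w, fst w) \<partial>N2)"
    by (subst stdN.nn_integral_fst[symmetric]) auto
  finally show ?thesis .
qed

lemma distr_N2_rotation:
  assumes cs: "c\<^sup>2 + s\<^sup>2 = 1" and s: "s > 0"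
  shows "distr N2 (borel \<Otimes>\<^sub>M borel) (\<lambda>w. (fst w, c * fst w + s * snd w)) =
         distr N2 (borel \<Otimes>\<^sub>M borel) (\<lambda>w. (c * fst w + s * snd w, fst w))"
proof (rule measure_eqI)
  fix A assume "A \<in> sets (distr N2 (borel \<Otimes>\<^sub>M borel) (\<lambda>w. (fst w, c * fst w + s * snd w)))"
  then have [measurable]: "A \<in> sets (borel \<Otimes>\<^sub>M borel)" by simp
  have "emeasure (distr N2 (borel \<Otimes>\<^sub>M borel) (\<lambda>w. (fst w, c * fst w + s * snd w))) A
     = (\<integral>\<^sup>+w. indicator A (fst w, c * fst w + s * snd w) \<partial>N2)"
    by (subst nn_integral_indicator[symmetric], simp, subst nn_integral_distr) auto
  also have "\<dots> = (\<integral>\<^sup>+w. indicator A (c * fst w + s * snd w, fst w) \<partial>N2)"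
    by (rule nn_integral_N2_rotation[OF _ cs s]) measurable
  also have "\<dots> = emeasure (distr N2 (borel \<Otimes>\<^sub>M borel) (\<lambda>w. (c * fst w + s * snd w, fst w))) A"
    by (subst nn_integral_indicator[symmetric], simp, subst nn_integral_distr) auto
  finally show "emeasure (distr N2 (borel \<Otimes>\<^sub>M borel) (\<lambda>w. (fst w, c * fst w + s * snd w))) A =
    emeasure (distr N2 (borel \<Otimes>\<^sub>M borel) (\<lambda>w. (c * fst w + s * snd w, fst w))) A" .
qed simp

lemma integral_N2_rotation:
  fixes F :: "real \<times> real \<Rightarrow> real"
  assumes [measurable]: "F \<in> borel_measurable (borel \<Otimes>\<^sub>M borel)"
    and cs: "c\<^sup>2 + s\<^sup>2 = 1" and s: "s > 0"
  shows "(\<integral>w. F (fst w, c * fst w + s * snd w) \<partial>N2) = (\<integral>w. F (c * fst w + s * snd w, fst w) \<partial>N2)"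
proof -
  have "(\<integral>w. F (fst w, c * fst w + s * snd w) \<partial>N2)
      = integral\<^sup>L (distr N2 (borel \<Otimes>\<^sub>M borel) (\<lambda>w. (fst w, c * fst w + s * snd w))) F"
    by (subst integral_distr) auto
  also have "\<dots> = (\<integral>w. F (c * fst w + s * snd w, fst w) \<partial>N2)"
    by (simp add: distr_N2_rotation[OF cs s] integral_distr)
  finally show ?thesis .
qed

lemma integral_N2_fst:
  fixes k :: "real \<Rightarrow> real"
  assumes [measurable]: "k \<in> borel_measurable borel"
  shows "(\<integral>w. k (fst w) \<partial>N2) = integral\<^sup>L stdN k"
proof -
  have "(\<integral>w. k (fst w) \<partial>N2) = integral\<^sup>L (distr N2 stdN fst) k"
    by (subst integral_distr) auto
  then show ?thesis by (simp add: stdN.distr_pair_fst)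
qed

lemma integral_N2_rotated:
  fixes k :: "real \<Rightarrow> real"
  assumes [measurable]: "k \<in> borel_measurable borel"
    and cs: "c\<^sup>2 + s\<^sup>2 = 1" and s: "s > 0"
  shows "(\<integral>w. k (c * fst w + s * snd w) \<partial>N2) = integral\<^sup>L stdN k"
  using integral_N2_rotation[of "\<lambda>p. k (snd p)", OF _ cs s] integral_N2_fst[of k] by simp

lemma integrable_N2_fst:
  fixes k :: "real \<Rightarrow> real"
  assumes [measurable]: "k \<in> borel_measurable borel" and "integrable stdN k"
  shows "integrable N2 (\<lambda>w. k (fst w))"
proof -
  have "integrable (distr N2 stdN fst) k" using assms(2) by (simp add: stdN.distr_pair_fst)
  then show ?thesis by (subst (asm) integrable_distr_eq) auto
qed

lemma integrable_N2_snd: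
  fixes k :: "real \<Rightarrow> real"
  assumes [measurable]: "k \<in> borel_measurable borel" and "integrable stdN k"
  shows "integrable N2 (\<lambda>w. k (snd w))"
proof -
  have "integrable N2 (\<lambda>(x, y). k (snd (y, x)))"
    using integrable_N2_fst[OF assms] by (simp add: case_prod_unfold)
  then show ?thesis by (subst (asm) N2.integrable_product_swap_iff) auto
qed

lemma integrable_N2_bounded:
  fixes g :: "real \<times> real \<Rightarrow> real"
  assumes [measurable]: "g \<in> borel_measurable N2" and "\<And>w. \<bar>g w\<bar> \<le> C"
  shows "integrable N2 g"
  by (rule N2.P.integrable_const_bound[where B=C]) (use assms in auto)

section \<open>Differentiation under the integral sign\<close>

lemma difference_quotient_bound:
  fixes f :: "real \<Rightarrow> real"
  assumes "\<And>t. (f has_real_derivative f' t) (at t)" "\<And>t. \<bar>f' t\<bar> \<le> B" "t \<noteq> t0"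
  shows "\<bar>(f t - f t0) / (t - t0)\<bar> \<le> B"
proof -
  have "\<bar>f t - f t0\<bar> \<le> B * \<bar>t - t0\<bar>"
    using field_differentiable_bound[of UNIV f f' B t t0] assms(1,2) by simp
  then show ?thesis using assms(3) by (simp add: abs_divide divide_le_eq)
qed

lemma has_real_derivative_integral:
  fixes F F' :: "real \<Rightarrow> 'a \<Rightarrow> real" and W :: "'a \<Rightarrow> real"
  assumes Fm: "\<And>t. F t \<in> borel_measurable M" and F'm: "\<And>t. F' t \<in> borel_measurable M"
    and Fi: "\<And>t. integrable M (F t)"
    and D: "\<And>t x. x \<in> space M \<Longrightarrow> ((\<lambda>t. F t x) has_real_derivative F' t x) (at t)"
    and Wi: "integrable M W" and Wb: "\<And>t x. x \<in> space M \<Longrightarrow> \<bar>F' t x\<bar> \<le> W x"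
  shows "((\<lambda>t. \<integral>x. F t x \<partial>M) has_real_derivative (\<integral>x. F' t0 x \<partial>M)) (at t0)"
  unfolding has_field_derivative_iff
proof (subst tendsto_at_iff_sequentially, intro allI impI)
  fix X :: "nat \<Rightarrow> real" assume X: "\<forall>i. X i \<in> UNIV - {t0}" "X \<longlonglongrightarrow> t0"
  define s where "s i x = (F (X i) x - F t0 x) / (X i - t0)" for i x
  have "(\<lambda>i. integral\<^sup>L M (s i)) \<longlonglongrightarrow> integral\<^sup>L M (F' t0)"
  proof (rule integral_dominated_convergence[where w=W])
    show "AE x in M. (\<lambda>i. s i x) \<longlonglongrightarrow> F' t0 x"
    proof (rule AE_I2)
      fix x assume x: "x \<in> space M"
      have "((\<lambda>t. (F t x - F t0 x) / (t - t0)) \<longlongrightarrow> F' t0 x) (at t0)"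
        using D[OF x, of t0] unfolding has_field_derivative_iff .
      then show "(\<lambda>i. s i x) \<longlonglongrightarrow> F' t0 x"
        unfolding s_def using X by (subst (asm) tendsto_at_iff_sequentially) (auto simp: comp_def)
    qed
    show "AE x in M. norm (s i x) \<le> W x" for i
      unfolding s_def real_norm_def
      by (intro AE_I2 difference_quotient_bound[where f'="\<lambda>t. F' t _"]) (use D Wb X in auto)
    show "s i \<in> borel_measurable M" for i unfolding s_def using Fm by measurable
  qed (use F'm Wi in auto)
  moreover have "((\<lambda>t. ((\<integral>x. F t x \<partial>M) - (\<integral>x. F t0 x \<partial>M)) / (t - t0)) \<circ> X) = (\<lambda>i. integral\<^sup>L M (s i))"
    unfolding s_def comp_def using Fi by (simp add: fun_eq_iff)
  ultimately show "((\<lambda>t. ((\<integral>x. F t x \<partial>M) - (\<integral>x. F t0 x \<partial>M)) / (t - t0)) \<circ> X) \<longlonglongrightarrow> (\<integral>x. F' t0 x \<partial>M)"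
    by simp
qed

section \<open>Gaussian covariance of a bounded nondecreasing function\<close>

locale gauss_cov =
  fixes f f' :: "real \<Rightarrow> real" and B L :: real
  assumes has_real_derivative_f: "\<And>x. (f has_real_derivative f' x) (at x)"
    and continuous_on_f': "continuous_on UNIV f'"
    and abs_f_le: "\<And>x. \<bar>f x\<bar> \<le> B"
    and f'_bounds: "\<And>x. 0 \<le> f' x \<and> f' x \<le> L"
begin

lemma borel_measurable_f[measurable]: "f \<in> borel_measurable borel"
  using has_real_derivative_f
  by (intro borel_measurable_continuous_onI) (meson DERIV_isCont continuous_at_imp_continuous_on)

lemma borel_measurable_f'[measurable]: "f' \<in> borel_measurable borel"
  using continuous_on_f' by (rule borel_measurable_continuous_onI)

lemma B_nonneg: "0 \<le> B"
  using abs_f_le[of 0] by simp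

lemma L_nonneg: "0 \<le> L"
  using f'_bounds[of 0] by simp

lemma abs_f'_le: "\<bar>f' x\<bar> \<le> L"
  using f'_bounds[of x] by simp

lemma abs_f'_power2_le: "\<bar>(f' x)\<^sup>2\<bar> \<le> L * L"
  using f'_bounds[of x] by (simp add: power2_eq_square mult_mono)

definition rot_cov :: "real \<Rightarrow> real" where
  "rot_cov t = (\<integral>w. f (fst w) * f (cos t * fst w + sin t * snd w) \<partial>N2)"

definition rot_dcov :: "real \<Rightarrow> real" where
  "rot_dcov t = (\<integral>w. f' (fst w) * f' (cos t * fst w + sin t * snd w) \<partial>N2)"

definition cov :: "real \<Rightarrow> real" where
  "cov \<eta> = (\<integral>w. f (fst w) * f (\<eta> * fst w + sqrt (1 - \<eta>\<^sup>2) * snd w) \<partial>N2)"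

lemma cov_eq_rot_cov: "-1 \<le> \<eta> \<Longrightarrow> \<eta> \<le> 1 \<Longrightarrow> cov \<eta> = rot_cov (arccos \<eta>)"
  unfolding cov_def rot_cov_def by (simp add: sin_arccos)

lemma rot_cov_has_real_derivative_integral:
  "(rot_cov has_real_derivative
     (\<integral>w. f (fst w) * (f' (cos t * fst w + sin t * snd w) * (- sin t * fst w + cos t * snd w)) \<partial>N2)) (at t)"
  unfolding rot_cov_def
proof (rule has_real_derivative_integral[where W="\<lambda>w. B * L * (\<bar>fst w\<bar> + \<bar>snd w\<bar>)"])
  show "integrable N2 (\<lambda>w. f (fst w) * f (cos t * fst w + sin t * snd w))" for t
    by (rule integrable_N2_bounded[where C="B * B"])
      (use abs_f_le B_nonneg in \<open>auto simp: abs_mult intro!: mult_mono\<close>)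
  show "integrable N2 (\<lambda>w. B * L * (\<bar>fst w\<bar> + \<bar>snd w\<bar>))"
    using integrable_N2_fst[of abs, OF _ integrable_stdN_abs] integrable_N2_snd[of abs, OF _ integrable_stdN_abs]
    by simp
  fix t and w :: "real \<times> real"
  have "((\<lambda>t. cos t * fst w + sin t * snd w) has_real_derivative (- sin t * fst w + cos t * snd w)) (at t)"
    by (auto intro!: derivative_eq_intros)
  from DERIV_chain2[OF has_real_derivative_f this]
  show "((\<lambda>t. f (fst w) * f (cos t * fst w + sin t * snd w)) has_real_derivative
        f (fst w) * (f' (cos t * fst w + sin t * snd w) * (- sin t * fst w + cos t * snd w))) (at t)"
    by (rule DERIV_cmult)
  have "\<bar>- sin t * fst w + cos t * snd w\<bar> \<le> \<bar>fst w\<bar> + \<bar>snd w\<bar>"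
    using abs_triangle_ineq[of "- sin t * fst w" "cos t * snd w"]
      mult_left_le_one_le[of "\<bar>fst w\<bar>" "\<bar>sin t\<bar>"] mult_left_le_one_le[of "\<bar>snd w\<bar>" "\<bar>cos t\<bar>"]
    by (simp add: abs_mult)
  then show "\<bar>f (fst w) * (f' (cos t * fst w + sin t * snd w) * (- sin t * fst w + cos t * snd w))\<bar>
        \<le> B * L * (\<bar>fst w\<bar> + \<bar>snd w\<bar>)"
    unfolding abs_mult mult.assoc
    by (intro mult_mono abs_f_le abs_f'_le) (auto simp: B_nonneg L_nonneg)
qed measurable

lemma integral_N2_stein:
  assumes s: "0 < s"
  shows "(\<integral>w. f' (fst w) * (snd w * f (c * fst w + s * snd w)) \<partial>N2)
       = s * (\<integral>w. f' (fst w) * f' (c * fst w + s * snd w) \<partial>N2)"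
proof -
  have "integrable N2 (\<lambda>w. f' (fst w) * (snd w * f (c * fst w + s * snd w)))"
  proof (rule Bochner_Integration.integrable_bound[where f="\<lambda>w. L * B * \<bar>snd w\<bar>"])
    show "integrable N2 (\<lambda>w. L * B * \<bar>snd w\<bar>)"
      using integrable_N2_snd[of abs, OF _ integrable_stdN_abs] by simp
    show "AE w in N2. norm (f' (fst w) * (snd w * f (c * fst w + s * snd w))) \<le> norm (L * B * \<bar>snd w\<bar>)"
    proof (intro AE_I2)
      fix w :: "real \<times> real"
      have "\<bar>f' (fst w)\<bar> * (\<bar>snd w\<bar> * \<bar>f (c * fst w + s * snd w)\<bar>) \<le> L * (\<bar>snd w\<bar> * B)"
        by (intro mult_mono abs_f'_le abs_f_le) (auto simp: L_nonneg)
      then show "norm (f' (fst w) * (snd w * f (c * fst w + s * snd w))) \<le> norm (L * B * \<bar>snd w\<bar>)"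
        using L_nonneg B_nonneg by (simp add: abs_mult mult_ac)
    qed
  qed measurable
  then have "(\<integral>w. f' (fst w) * (snd w * f (c * fst w + s * snd w)) \<partial>N2)
      = (\<integral>x. f' x * (\<integral>z. z * f (c * x + s * z) \<partial>stdN) \<partial>stdN)"
    by (simp add: N2.integral_fst'[symmetric])
  also have "\<dots> = s * (\<integral>x. \<integral>z. f' x * f' (c * x + s * z) \<partial>stdN \<partial>stdN)"
    using stein_lemma_affine[OF has_real_derivative_f continuous_on_f' abs_f_le abs_f'_le s]
    by (simp add: mult_ac)
  also have "(\<integral>x. \<integral>z. f' x * f' (c * x + s * z) \<partial>stdN \<partial>stdN)
      = (\<integral>w. f' (fst w) * f' (c * fst w + s * snd w) \<partial>N2)"
  proof (subst N2.integral_fst'[symmetric])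
    show "integrable N2 (\<lambda>w. f' (fst w) * f' (c * fst w + s * snd w))"
      by (rule integrable_N2_bounded[where C="L * L"], measurable)
        (use f'_bounds L_nonneg in \<open>auto simp: abs_mult intro!: mult_mono\<close>)
  qed simp
  finally show ?thesis .
qed

text \<open>Rotating \<open>(G, G')\<close> into \<open>(G', G)\<close> turns the derivative into \<open>E[f'(G) Z f(G')]\<close>,
  and Stein's lemma in \<open>Z\<close> finishes.\<close>

lemma rot_cov_has_real_derivative:
  assumes "0 < sin t"
  shows "(rot_cov has_real_derivative - sin t * rot_dcov t) (at t)"
proof -
  define c s where "c = cos t" and "s = sin t"
  have cs: "c\<^sup>2 + s\<^sup>2 = 1" and s: "0 < s" using assms by (simp_all add: c_def s_def)
  define Q where "Q p = f (fst p) * (f' (snd p) * ((c * snd p - fst p) / s))" for p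
  have [measurable]: "Q \<in> borel_measurable (borel \<Otimes>\<^sub>M borel)" unfolding Q_def by measurable
  have "(\<integral>w. f (fst w) * (f' (c * fst w + s * snd w) * (- s * fst w + c * snd w)) \<partial>N2)
      = (\<integral>w. Q (fst w, c * fst w + s * snd w) \<partial>N2)"
  proof (intro Bochner_Integration.integral_cong refl)
    fix w :: "real \<times> real"
    have "c * (c * fst w + s * snd w) - fst w = s * (- s * fst w + c * snd w) + (c\<^sup>2 + s\<^sup>2 - 1) * fst w"
      by (simp add: power2_eq_square algebra_simps)
    then have "c * (c * fst w + s * snd w) - fst w = s * (- s * fst w + c * snd w)"
      using cs by simp
    then show "f (fst w) * (f' (c * fst w + s * snd w) * (- s * fst w + c * snd w)) = Q (fst w, c * fst w + s * snd w)"
      unfolding Q_def using s by simp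
  qed
  also have "\<dots> = (\<integral>w. Q (c * fst w + s * snd w, fst w) \<partial>N2)"
    by (rule integral_N2_rotation[OF _ cs s]) measurable
  also have "\<dots> = - (\<integral>w. f' (fst w) * (snd w * f (c * fst w + s * snd w)) \<partial>N2)"
    unfolding Q_def using s by (simp add: field_simps)
  also have "\<dots> = - s * rot_dcov t"
    using integral_N2_stein[OF s, of c] by (simp add: rot_dcov_def c_def s_def)
  finally show ?thesis
    using rot_cov_has_real_derivative_integral[of t] by (simp add: c_def s_def)
qed

lemma rot_dcov_nonneg: "0 \<le> rot_dcov t"
  unfolding rot_dcov_def by (intro Bochner_Integration.integral_nonneg) (use f'_bounds in auto)

lemma rot_dcov_zero: "rot_dcov 0 = (\<integral>x. (f' x)\<^sup>2 \<partial>stdN)"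
  unfolding rot_dcov_def by (subst integral_N2_fst[symmetric]) (measurable, simp add: power2_eq_square)

text \<open>Use \<open>ab \<le> (a\<^sup>2 + b\<^sup>2) / 2\<close> pointwise; \<open>G\<close> and \<open>cos t G + sin t Z\<close> have the same law.\<close>

lemma rot_dcov_le:
  assumes s: "0 < sin t"
  shows "rot_dcov t \<le> rot_dcov 0"
proof -
  have i1: "integrable N2 (\<lambda>w. (f' (fst w))\<^sup>2)"
    and i2: "integrable N2 (\<lambda>w. (f' (cos t * fst w + sin t * snd w))\<^sup>2)"
    by (rule integrable_N2_bounded[where C="L * L"], measurable, rule abs_f'_power2_le)+
  have "rot_dcov t \<le> (\<integral>w. ((f' (fst w))\<^sup>2 + (f' (cos t * fst w + sin t * snd w))\<^sup>2) / 2 \<partial>N2)"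
    unfolding rot_dcov_def
  proof (rule integral_mono)
    show "integrable N2 (\<lambda>w. f' (fst w) * f' (cos t * fst w + sin t * snd w))"
      by (rule integrable_N2_bounded[where C="L * L"], measurable)
        (use f'_bounds L_nonneg in \<open>auto simp: abs_mult intro!: mult_mono\<close>)
    show "integrable N2 (\<lambda>w. ((f' (fst w))\<^sup>2 + (f' (cos t * fst w + sin t * snd w))\<^sup>2) / 2)"
      using i1 i2 by simp
    fix w :: "real \<times> real"
    have "0 \<le> (f' (fst w) - f' (cos t * fst w + sin t * snd w))\<^sup>2" by simp
    then show "f' (fst w) * f' (cos t * fst w + sin t * snd w)
        \<le> ((f' (fst w))\<^sup>2 + (f' (cos t * fst w + sin t * snd w))\<^sup>2) / 2"
      by (simp add: power2_eq_square algebra_simps)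
  qed
  also have "\<dots> = ((\<integral>w. (f' (fst w))\<^sup>2 \<partial>N2) + (\<integral>w. (f' (cos t * fst w + sin t * snd w))\<^sup>2 \<partial>N2)) / 2"
    using i1 i2 by simp
  also have "\<dots> = rot_dcov 0"
    using integral_N2_fst[of "\<lambda>x. (f' x)\<^sup>2"] integral_N2_rotated[of "\<lambda>x. (f' x)\<^sup>2" "cos t" "sin t"] s
    by (simp add: rot_dcov_zero)
  finally show ?thesis .
qed

lemma rot_dcov_zero_le: "rot_dcov 0 \<le> L * (\<integral>x. x * f x \<partial>stdN)"
proof -
  have stein: "integrable stdN f'" "(\<integral>x. x * f x \<partial>stdN) = (\<integral>x. f' x \<partial>stdN)"
    using stein_lemma(2,3)[OF has_real_derivative_f continuous_on_f' abs_f_le abs_f'_le] by auto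
  have "rot_dcov 0 \<le> (\<integral>x. L * f' x \<partial>stdN)"
    unfolding rot_dcov_zero
  proof (rule integral_mono)
    show "integrable stdN (\<lambda>x. (f' x)\<^sup>2)"
      by (rule stdN.integrable_const_bound[where B="L * L"])
        (use abs_f'_power2_le in auto)
    show "(f' x)\<^sup>2 \<le> L * f' x" for x
      using f'_bounds[of x] by (simp add: power2_eq_square mult_right_mono)
  qed (use stein in simp)
  also have "\<dots> = L * (\<integral>x. x * f x \<partial>stdN)" using stein by simp
  finally show ?thesis .
qed

lemma continuous_on_rot_cov: "continuous_on A rot_cov"
  using rot_cov_has_real_derivative_integral by (meson DERIV_isCont continuous_at_imp_continuous_on)

text \<open>On \<open>[arccos b, arccos a]\<close> the derivative \<open>-sin t \<cdot> rot_dcov t\<close> of \<open>rot_cov\<close> lies between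
  \<open>-sin t \<cdot> rot_dcov 0\<close> and \<open>0\<close>, and \<open>-sin t\<close> is the derivative of \<open>cos t\<close>.\<close>

lemma cov_increment:
  assumes ab: "-1 \<le> a" "a \<le> b" "b \<le> 1"
  shows cov_mono: "cov a \<le> cov b"
    and cov_increment_le: "cov b - cov a \<le> (b - a) * rot_dcov 0"
proof -
  define ta tb where "ta = arccos a" and "tb = arccos b"
  have tab: "tb \<le> ta" unfolding ta_def tb_def using ab by (intro arccos_le_arccos) auto
  have sin_pos: "0 < sin t" if "tb < t" "t < ta" for t
    using arccos_lbound[of b] arccos_ubound[of a] ab that by (intro sin_gt_zero) (auto simp: ta_def tb_def)
  have "- rot_cov tb \<le> - rot_cov ta"
  proof (rule DERIV_nonneg_imp_increasing_open[OF tab])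
    fix t assume t: "tb < t" "t < ta"
    show "\<exists>y. ((\<lambda>t. - rot_cov t) has_real_derivative y) (at t) \<and> 0 \<le> y"
      using DERIV_minus[OF rot_cov_has_real_derivative[OF sin_pos[OF t]]] sin_pos[OF t] rot_dcov_nonneg[of t]
      by auto
  qed (intro continuous_intros continuous_on_rot_cov)
  then show "cov a \<le> cov b" using ab by (simp add: cov_eq_rot_cov ta_def tb_def)
  have "rot_cov tb - rot_dcov 0 * cos tb \<le> rot_cov ta - rot_dcov 0 * cos ta"
  proof (rule DERIV_nonneg_imp_increasing_open[OF tab])
    fix t assume t: "tb < t" "t < ta"
    have "((\<lambda>t. rot_cov t - rot_dcov 0 * cos t) has_real_derivative sin t * (rot_dcov 0 - rot_dcov t)) (at t)"
      using rot_cov_has_real_derivative[OF sin_pos[OF t]]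
      by (auto intro!: derivative_eq_intros simp: algebra_simps)
    moreover have "0 \<le> sin t * (rot_dcov 0 - rot_dcov t)"
      using sin_pos[OF t] rot_dcov_le[OF sin_pos[OF t]] by simp
    ultimately show "\<exists>y. ((\<lambda>t. rot_cov t - rot_dcov 0 * cos t) has_real_derivative y) (at t) \<and> 0 \<le> y"
      by blast
  qed (intro continuous_intros continuous_on_rot_cov)
  then show "cov b - cov a \<le> (b - a) * rot_dcov 0" using ab
    by (simp add: cov_eq_rot_cov ta_def tb_def algebra_simps)
qed

lemma cov_zero_nonneg: "0 \<le> cov 0"
proof -
  have "integrable N2 (\<lambda>w. f (fst w) * f (snd w))"
    by (rule integrable_N2_bounded[where C="B * B"], measurable)
      (use abs_f_le B_nonneg in \<open>auto simp: abs_mult intro!: mult_mono\<close>)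
  then have "cov 0 = (\<integral>x. f x \<partial>stdN) * (\<integral>x. f x \<partial>stdN)"
    unfolding cov_def by (simp add: N2.integral_fst'[symmetric])
  then show ?thesis by simp
qed

end

section \<open>The residual of the proximal map\<close>

locale prox_residual =
  fixes \<rho> :: "real \<Rightarrow> real" and \<gamma> :: real
  assumes differentiable_\<rho>: "\<forall>t. \<rho> differentiable (at t)"
    and differentiable_deriv_\<rho>: "\<forall>t. deriv \<rho> differentiable (at t)"
    and continuous_on_deriv2_\<rho>: "continuous_on UNIV (deriv (deriv \<rho>))"
    and abs_deriv_\<rho>_le: "\<forall>t. \<bar>deriv \<rho> t\<bar> \<le> 1"
    and deriv2_\<rho>_bounds: "\<forall>t. 0 < deriv (deriv \<rho>) t \<and> deriv (deriv \<rho>) t \<le> 1"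
    and \<gamma>_pos: "0 < \<gamma>"
begin

lemma has_real_derivative_\<rho>: "(\<rho> has_real_derivative deriv \<rho> t) (at t)"
  using differentiable_\<rho> DERIV_deriv_iff_real_differentiable by blast

lemma has_real_derivative_deriv_\<rho>: "(deriv \<rho> has_real_derivative deriv (deriv \<rho>) t) (at t)"
  using differentiable_deriv_\<rho> DERIV_deriv_iff_real_differentiable by blast

lemma continuous_on_deriv_\<rho>: "continuous_on UNIV (deriv \<rho>)"
  using has_real_derivative_deriv_\<rho> by (meson DERIV_isCont continuous_at_imp_continuous_on)

lemma deriv_\<rho>_diff: "\<exists>k. 0 \<le> k \<and> k \<le> 1 \<and> deriv \<rho> a - deriv \<rho> b = k * (a - b)"
proof -
  have "\<exists>k. 0 \<le> k \<and> k \<le> 1 \<and> deriv \<rho> y - deriv \<rho> x = k * (y - x)" if xy: "x < y" for x y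
  proof -
    obtain z where "deriv \<rho> y - deriv \<rho> x = (y - x) * deriv (deriv \<rho>) z"
      using MVT2[OF xy, of "deriv \<rho>" "deriv (deriv \<rho>)"] has_real_derivative_deriv_\<rho> by blast
    then show ?thesis using deriv2_\<rho>_bounds by (intro exI[of _ "deriv (deriv \<rho>) z"]) (auto simp: less_imp_le)
  qed
  from this[of a b] this[of b a] show ?thesis
    by (cases a b rule: linorder_cases) (force simp: algebra_simps)+
qed

definition prox_inv :: "real \<Rightarrow> real \<Rightarrow> real" where
  "prox_inv e p = p - \<gamma> * deriv \<rho> (e - p)"

lemma continuous_on_prox_inv: "continuous_on A (prox_inv e)"
  unfolding prox_inv_def by (intro continuous_intros continuous_on_compose2[OF continuous_on_deriv_\<rho>]) auto

lemma prox_inv_less: "p < p' \<Longrightarrow> prox_inv e p < prox_inv e p'"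
proof -
  assume pp': "p < p'"
  obtain k where k: "0 \<le> k" "deriv \<rho> (e - p) - deriv \<rho> (e - p') = k * ((e - p) - (e - p'))"
    using deriv_\<rho>_diff by blast
  moreover have "0 \<le> k * ((e - p) - (e - p'))" using k(1) pp' by simp
  ultimately have "\<gamma> * deriv \<rho> (e - p') \<le> \<gamma> * deriv \<rho> (e - p)"
    using \<gamma>_pos by (intro mult_left_mono) auto
  then show ?thesis unfolding prox_inv_def using pp' by linarith
qed

lemma prox_inv_inj: "prox_inv e p = prox_inv e p' \<Longrightarrow> p = p'"
  using prox_inv_less by (metis linorder_neqE_linordered_idom order_less_irrefl)

lemma abs_\<gamma>_deriv_\<rho>_le: "\<bar>\<gamma> * deriv \<rho> t\<bar> \<le> \<gamma>"
  using abs_deriv_\<rho>_le \<gamma>_pos by (simp add: abs_mult mult_left_le_one_le)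

lemma prox_inv_surj: "\<exists>p. prox_inv e p = x"
proof -
  have "prox_inv e (x - \<gamma>) \<le> x" "x \<le> prox_inv e (x + \<gamma>)"
    unfolding prox_inv_def using abs_\<gamma>_deriv_\<rho>_le[of "e - (x - \<gamma>)"] abs_\<gamma>_deriv_\<rho>_le[of "e - (x + \<gamma>)"]
    by (simp_all add: abs_le_iff)
  moreover have "x - \<gamma> \<le> x + \<gamma>" using \<gamma>_pos by simp
  ultimately show ?thesis
    using IVT'[of "prox_inv e" "x - \<gamma>" x "x + \<gamma>", OF _ _ _ continuous_on_prox_inv] by blast
qed

lemma prox_eqI:
  assumes hp: "prox_inv e p = x"
  shows "prox (\<lambda>u. \<gamma> * rho_e \<rho> e u) x = p"
proof -
  define \<Phi> where "\<Phi> y = (x - y)\<^sup>2 / 2 + \<gamma> * rho_e \<rho> e y" for y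
  have d\<Phi>: "(\<Phi> has_real_derivative (prox_inv e y - x)) (at y)" for y
  proof -
    have "((\<lambda>y. \<rho> (e - y)) has_real_derivative deriv \<rho> (e - y) * (- 1)) (at y)"
      by (rule DERIV_chain2[OF has_real_derivative_\<rho>]) (auto intro!: derivative_eq_intros)
    then have "(\<Phi> has_real_derivative (y - x) + \<gamma> * (deriv \<rho> (e - y) * (- 1))) (at y)"
      unfolding \<Phi>_def rho_e_def by (auto intro!: derivative_eq_intros simp: field_simps)
    then show ?thesis by (simp add: prox_inv_def algebra_simps)
  qed
  have min: "\<Phi> p \<le> \<Phi> y" for y
  proof (cases y p rule: linorder_cases)
    case less
    from MVT2[OF less, of \<Phi> "\<lambda>y. prox_inv e y - x"] d\<Phi> obtain z where
      "z < p" "\<Phi> p - \<Phi> y = (p - y) * (prox_inv e z - x)" by blast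
    moreover have "prox_inv e z < x" using \<open>z < p\<close> hp prox_inv_less by blast
    ultimately show ?thesis using less by (smt (verit) mult_pos_neg)
  next
    case greater
    from MVT2[OF greater, of \<Phi> "\<lambda>y. prox_inv e y - x"] d\<Phi> obtain z where
      "p < z" "\<Phi> y - \<Phi> p = (y - p) * (prox_inv e z - x)" by blast
    moreover have "x < prox_inv e z" using \<open>p < z\<close> hp prox_inv_less by blast
    ultimately show ?thesis using greater by (smt (verit) mult_pos_pos)
  qed simp
  show ?thesis unfolding prox_def
  proof (rule the_equality)
    show "\<forall>y. (x - p)\<^sup>2 / 2 + \<gamma> * rho_e \<rho> e p \<le> (x - y)\<^sup>2 / 2 + \<gamma> * rho_e \<rho> e y"
      using min unfolding \<Phi>_def by blast
    fix p' assume "\<forall>y. (x - p')\<^sup>2 / 2 + \<gamma> * rho_e \<rho> e p' \<le> (x - y)\<^sup>2 / 2 + \<gamma> * rho_e \<rho> e y"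
    then have "\<forall>y. \<bar>p' - y\<bar> < 1 \<longrightarrow> \<Phi> p' \<le> \<Phi> y" unfolding \<Phi>_def by blast
    from DERIV_local_min[OF d\<Phi> _ this] have "prox_inv e p' = x" by simp
    then show "p' = p" using hp by (metis prox_inv_inj)
  qed
qed

definition proxe :: "real \<Rightarrow> real \<Rightarrow> real" where
  "proxe e x = prox (\<lambda>u. \<gamma> * rho_e \<rho> e u) x"

lemma prox_inv_proxe: "prox_inv e (proxe e x) = x"
  using prox_inv_surj[of e x] prox_eqI unfolding proxe_def by metis

lemma resid_eq_proxe: "resid \<rho> \<gamma> e x = x - proxe e x"
  unfolding resid_def proxe_def by simp

lemma abs_resid_le: "\<bar>resid \<rho> \<gamma> e x\<bar> \<le> \<gamma>"
  using prox_inv_proxe[of e x] abs_\<gamma>_deriv_\<rho>_le unfolding resid_eq_proxe prox_inv_def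
  by (metis add_diff_cancel_left' diff_add_cancel minus_diff_eq abs_minus_cancel)

lemma proxe_lipschitz: "\<bar>proxe e x - proxe e' x'\<bar> \<le> \<bar>x - x'\<bar> + \<bar>e - e'\<bar>"
proof -
  define p p' where "p = proxe e x" and "p' = proxe e' x'"
  obtain k where k: "0 \<le> k" "k \<le> 1" "deriv \<rho> (e - p) - deriv \<rho> (e' - p') = k * ((e - p) - (e' - p'))"
    using deriv_\<rho>_diff by blast
  have gk: "0 \<le> \<gamma> * k" using \<gamma>_pos k by simp
  have "x - x' = (p - p') - \<gamma> * (deriv \<rho> (e - p) - deriv \<rho> (e' - p'))"
    using prox_inv_proxe[of e x] prox_inv_proxe[of e' x'] unfolding prox_inv_def p_def p'_def
    by (simp add: algebra_simps)
  then have eq: "(p - p') * (1 + \<gamma> * k) = (x - x') + \<gamma> * k * (e - e')"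
    by (simp add: k(3) algebra_simps)
  have "\<bar>p - p'\<bar> * (1 + \<gamma> * k) = \<bar>(x - x') + \<gamma> * k * (e - e')\<bar>"
    using gk by (simp add: abs_mult flip: eq)
  also have "\<dots> \<le> \<bar>x - x'\<bar> + \<gamma> * k * \<bar>e - e'\<bar>"
    using abs_triangle_ineq[of "x - x'" "\<gamma> * k * (e - e')"]
    by (simp only: abs_mult[of "\<gamma> * k"] abs_of_nonneg[OF gk])
  also have "\<dots> \<le> (\<bar>x - x'\<bar> + \<bar>e - e'\<bar>) * (1 + \<gamma> * k)"
    using gk mult_nonneg_nonneg[OF gk abs_ge_zero[of "x - x'"]] by (simp add: algebra_simps)
  finally show ?thesis
    unfolding p_def p'_def using gk by (simp add: mult_le_cancel_right_pos)
qed

lemma continuous_on_proxe: "continuous_on UNIV (\<lambda>w. proxe (fst w) (snd w))"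
proof (rule lipschitz_on_continuous_on[where L=2], rule lipschitz_onI)
  fix w w' :: "real \<times> real"
  have "dist (proxe (fst w) (snd w)) (proxe (fst w') (snd w')) \<le> dist (snd w) (snd w') + dist (fst w) (fst w')"
    using proxe_lipschitz by (simp add: dist_real_def)
  also have "\<dots> \<le> 2 * dist w w'" using dist_fst_le[of w w'] dist_snd_le[of w w'] by simp
  finally show "dist (proxe (fst w) (snd w)) (proxe (fst w') (snd w')) \<le> 2 * dist w w'" .
qed simp

text \<open>By the inverse function rule, \<open>\<partial>\<^sub>x resid e x = 1 - 1 / (1 + \<gamma> \<rho>''(e - proxe e x))\<close>.\<close>

definition resid_slope :: "real \<Rightarrow> real \<Rightarrow> real" where
  "resid_slope e x = \<gamma> * deriv (deriv \<rho>) (e - proxe e x) / (1 + \<gamma> * deriv (deriv \<rho>) (e - proxe e x))"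

lemma \<gamma>_deriv2_\<rho>_pos: "0 < \<gamma> * deriv (deriv \<rho>) t"
  using deriv2_\<rho>_bounds \<gamma>_pos by simp

lemma resid_slope_bounds: "0 \<le> resid_slope e x \<and> resid_slope e x \<le> 1"
  using \<gamma>_deriv2_\<rho>_pos[of "e - proxe e x"] unfolding resid_slope_def by (simp add: divide_le_eq)

lemma resid_has_real_derivative: "(resid \<rho> \<gamma> e has_real_derivative resid_slope e x) (at x)"
proof -
  define d where "d = 1 + \<gamma> * deriv (deriv \<rho>) (e - proxe e x)"
  have d: "0 < d" using \<gamma>_deriv2_\<rho>_pos unfolding d_def by (smt (verit))
  have "(prox_inv e has_real_derivative d) (at (proxe e x))"
  proof -
    have "((\<lambda>y. deriv \<rho> (e - y)) has_real_derivative deriv (deriv \<rho>) (e - proxe e x) * (- 1)) (at (proxe e x))"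
      by (rule DERIV_chain2[OF has_real_derivative_deriv_\<rho>]) (auto intro!: derivative_eq_intros)
    then show ?thesis unfolding prox_inv_def[abs_def] d_def
      by (auto intro!: derivative_eq_intros)
  qed
  moreover have "isCont (proxe e) x"
    using continuous_on_compose2[OF continuous_on_proxe, of UNIV "\<lambda>x. (e, x)"]
    by (auto intro: continuous_intros simp: continuous_on_eq_continuous_at)
  ultimately have "(proxe e has_real_derivative inverse d) (at x)"
    using DERIV_inverse_function[of "prox_inv e" d "proxe e" x "x - 1" "x + 1"] d prox_inv_proxe by simp
  then have "((\<lambda>x. x - proxe e x) has_real_derivative 1 - inverse d) (at x)"
    by (auto intro!: derivative_eq_intros)
  moreover have "1 - inverse d = resid_slope e x"
    unfolding resid_slope_def d_def[symmetric] using d by (simp add: field_simps d_def)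
  ultimately show ?thesis unfolding resid_eq_proxe[abs_def] by simp
qed

lemma continuous_on_resid_slope: "continuous_on UNIV (\<lambda>w. resid_slope (fst w) (snd w))"
proof -
  have "continuous_on UNIV (\<lambda>w. deriv (deriv \<rho>) (fst w - proxe (fst w) (snd w)))"
    by (intro continuous_on_compose2[OF continuous_on_deriv2_\<rho>] continuous_intros continuous_on_proxe) auto
  moreover have "1 + \<gamma> * deriv (deriv \<rho>) (fst w - proxe (fst w) (snd w)) \<noteq> 0" for w
    using \<gamma>_deriv2_\<rho>_pos by (smt (verit))
  ultimately show ?thesis unfolding resid_slope_def by (intro continuous_intros) auto
qed

lemma resid_measurable_pair: "(\<lambda>w. resid \<rho> \<gamma> (fst w) (snd w)) \<in> borel_measurable (borel \<Otimes>\<^sub>M borel)"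
  unfolding borel_prod resid_eq_proxe
  by (intro borel_measurable_continuous_onI continuous_intros continuous_on_proxe)

lemma resid_measurable[measurable (raw)]:
  "f \<in> borel_measurable M \<Longrightarrow> g \<in> borel_measurable M \<Longrightarrow> (\<lambda>w. resid \<rho> \<gamma> (f w) (g w)) \<in> borel_measurable M"
  using measurable_compose[OF measurable_Pair resid_measurable_pair, of f M g] by simp

end

lemma abs_integral_le_prob:
  fixes f :: "'a \<Rightarrow> real"
  assumes M: "prob_space M" and b: "\<And>x. x \<in> space M \<Longrightarrow> \<bar>f x\<bar> \<le> K"
  shows "\<bar>integral\<^sup>L M f\<bar> \<le> K"
proof -
  interpret M: prob_space M by (rule M)
  obtain x where x: "x \<in> space M" using M.not_empty by blast
  show ?thesis
  proof (cases "integrable M f")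
    case True
    have "\<bar>integral\<^sup>L M f\<bar> \<le> (\<integral>x. K \<partial>M)"
      using True b by (intro order_trans[OF integral_abs_bound] integral_mono) auto
    then show ?thesis by (simp add: M.prob_space)
  next
    case False
    then show ?thesis using b[OF x] by (simp add: not_integrable_integral_eq)
  qed
qed

lemma pair_prob_space_stdN: "prob_space C \<Longrightarrow> pair_prob_space stdN C"
  by (simp add: pair_prob_space_def pair_sigma_finite_def prob_space_stdN prob_space_imp_sigma_finite)

lemma
  fixes k :: "real \<Rightarrow> real"
  assumes C: "prob_space C" and [measurable]: "k \<in> borel_measurable borel" and k: "integrable stdN k"
  shows integrable_stdN_pair_fst: "integrable (stdN \<Otimes>\<^sub>M C) (\<lambda>w. k (fst w))"
    and integral_stdN_pair_fst: "(\<integral>w. k (fst w) \<partial>(stdN \<Otimes>\<^sub>M C)) = integral\<^sup>L stdN k"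
proof -
  have d: "distr (stdN \<Otimes>\<^sub>M C) stdN fst = stdN" by (rule prob_space.distr_pair_fst[OF C])
  have km: "k \<in> borel_measurable stdN" by simp
  show "integrable (stdN \<Otimes>\<^sub>M C) (\<lambda>w. k (fst w))"
    using k by (subst (asm) d[symmetric], subst (asm) integrable_distr_eq) (auto simp: km)
  show "(\<integral>w. k (fst w) \<partial>(stdN \<Otimes>\<^sub>M C)) = integral\<^sup>L stdN k"
    by (subst (2) d[symmetric], subst integral_distr) (auto simp: km)
qed

lemma integral_stdN_stdN_pair:
  fixes H :: "real \<Rightarrow> real \<Rightarrow> 'c \<Rightarrow> real"
  assumes C: "prob_space C"
    and Hm[measurable]: "(\<lambda>w. H (fst w) (fst (snd w)) (snd (snd w))) \<in> borel_measurable (stdN \<Otimes>\<^sub>M (stdN \<Otimes>\<^sub>M C))"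
    and Hb: "\<And>g z e. \<bar>H g z e\<bar> \<le> K"
  shows "(\<integral>w. (case w of (g, z, e) \<Rightarrow> H g z e) \<partial>(stdN \<Otimes>\<^sub>M (stdN \<Otimes>\<^sub>M C)))
       = (\<integral>e. (\<integral>w. H (fst w) (snd w) e \<partial>N2) \<partial>C)"
proof -
  interpret C: prob_space C by (rule C)
  interpret P2: pair_prob_space stdN C by (rule pair_prob_space_stdN[OF C])
  interpret P1: pair_prob_space stdN "stdN \<Otimes>\<^sub>M C" by (rule pair_prob_space_stdN[OF P2.P.prob_space_axioms])
  have mg: "(\<lambda>p. H g (fst p) (snd p)) \<in> borel_measurable (stdN \<Otimes>\<^sub>M C)" for g
    using measurable_compose[OF _ Hm, of "\<lambda>p. (g, p)"] by simp
  have me: "(\<lambda>p. H (fst p) (snd p) e) \<in> borel_measurable N2" if "e \<in> space C" for e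
    using measurable_compose[OF _ Hm, of "\<lambda>p. (fst p, (snd p, e))"] that by simp
  have "(\<integral>w. (case w of (g, z, e) \<Rightarrow> H g z e) \<partial>(stdN \<Otimes>\<^sub>M (stdN \<Otimes>\<^sub>M C)))
      = (\<integral>g. \<integral>v. H g (fst v) (snd v) \<partial>(stdN \<Otimes>\<^sub>M C) \<partial>stdN)"
    using P1.integral_fst[of "\<lambda>g v. H g (fst v) (snd v)"]
    by (simp add: case_prod_unfold P1.P.integrable_const_bound[where B=K] Hb)
  also have "\<dots> = (\<integral>g. \<integral>e. \<integral>z. H g z e \<partial>stdN \<partial>C \<partial>stdN)"
    using P2.integral_snd[of "\<lambda>z e. H _ z e"]
    by (intro Bochner_Integration.integral_cong refl)
      (simp add: case_prod_unfold P2.P.integrable_const_bound[where B=K] Hb mg)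
  also have "\<dots> = (\<integral>e. \<integral>g. \<integral>z. H g z e \<partial>stdN \<partial>stdN \<partial>C)"
  proof (rule P2.Fubini_integral[symmetric])
    have "(\<lambda>(x, y). H (fst x) y (snd x)) \<in> borel_measurable ((stdN \<Otimes>\<^sub>M C) \<Otimes>\<^sub>M stdN)"
      using measurable_compose[OF _ Hm, of "\<lambda>p. (fst (fst p), (snd p, snd (fst p)))"]
      by (simp add: case_prod_unfold)
    then have "(\<lambda>w. \<integral>z. H (fst w) z (snd w) \<partial>stdN) \<in> borel_measurable (stdN \<Otimes>\<^sub>M C)"
      by (rule stdN.borel_measurable_lebesgue_integral)
    moreover have "\<bar>\<integral>z. H g z e \<partial>stdN\<bar> \<le> K" for g e
      by (rule abs_integral_le_prob[OF prob_space_stdN]) (rule Hb)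
    ultimately show "integrable (stdN \<Otimes>\<^sub>M C) (\<lambda>(g, e). \<integral>z. H g z e \<partial>stdN)"
      by (intro P2.P.integrable_const_bound[where B=K]) (auto simp: case_prod_unfold)
  qed
  also have "\<dots> = (\<integral>e. (\<integral>w. H (fst w) (snd w) e \<partial>N2) \<partial>C)"
    using N2.integral_fst[of "\<lambda>g z. H g z _"]
    by (intro Bochner_Integration.integral_cong refl)
      (simp add: case_prod_unfold N2.P.integrable_const_bound[where B=K] Hb me)
  finally show ?thesis .
qed

section \<open>The map \<open>F\<close>\<close>

locale prox_system = prox_residual \<rho> \<gamma> for \<rho> \<gamma> +
  fixes Pe :: "real measure" and q \<delta> \<sigma> :: real
  assumes prob_space_Pe: "prob_space Pe" and sets_Pe: "sets Pe = sets borel"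
    and \<sigma>_pos: "0 < \<sigma>" and q_pos: "0 < q" and q\<delta>_pos: "0 < q * \<delta>"
    and system: "sys_holds Pe \<rho> q \<delta> \<sigma> \<gamma>"
begin

lemmas sets_Pe_cong[measurable_cong] = sets_Pe

sublocale Pe: prob_space Pe by (rule prob_space_Pe)

sublocale SP: pair_prob_space stdN Pe by (rule pair_prob_space_stdN[OF prob_space_Pe])

definition scaled_resid :: "real \<Rightarrow> real \<Rightarrow> real" where
  "scaled_resid e x = resid \<rho> \<gamma> e (\<sigma> * x)"

lemma gauss_cov_scaled_resid: "gauss_cov (scaled_resid e) (\<lambda>x. resid_slope e (\<sigma> * x) * \<sigma>) \<gamma> \<sigma>"
proof
  fix x
  show "(scaled_resid e has_real_derivative resid_slope e (\<sigma> * x) * \<sigma>) (at x)"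
    unfolding scaled_resid_def[abs_def]
    by (rule DERIV_chain2[OF resid_has_real_derivative]) (auto intro!: derivative_eq_intros)
  show "\<bar>scaled_resid e x\<bar> \<le> \<gamma>"
    unfolding scaled_resid_def by (rule abs_resid_le)
  show "0 \<le> resid_slope e (\<sigma> * x) * \<sigma> \<and> resid_slope e (\<sigma> * x) * \<sigma> \<le> \<sigma>"
    using resid_slope_bounds[of e "\<sigma> * x"] \<sigma>_pos by (auto simp: mult_left_le_one_le)
next
  have "continuous_on UNIV (\<lambda>x. (e, \<sigma> * x))" by (intro continuous_intros)
  from continuous_on_compose2[OF continuous_on_resid_slope this]
  have "continuous_on UNIV (\<lambda>x. resid_slope e (\<sigma> * x))" by simp
  then show "continuous_on UNIV (\<lambda>x. resid_slope e (\<sigma> * x) * \<sigma>)"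
    by (intro continuous_intros)
qed

lemma abs_resid_mult_le: "\<bar>resid \<rho> \<gamma> e x * resid \<rho> \<gamma> e' y\<bar> \<le> \<gamma> * \<gamma>"
  unfolding abs_mult by (intro mult_mono abs_resid_le) (use \<gamma>_pos in auto)

lemma cov_scaled_resid:
  "gauss_cov.cov (scaled_resid e) \<eta>
     = (\<integral>w. resid \<rho> \<gamma> e (\<sigma> * fst w) * resid \<rho> \<gamma> e (\<sigma> * (\<eta> * fst w + sqrt (1 - \<eta>\<^sup>2) * snd w)) \<partial>N2)"
  using gauss_cov.cov_def[OF gauss_cov_scaled_resid] by (simp add: scaled_resid_def)

lemma integrable_cov_scaled_resid: "integrable Pe (\<lambda>e. gauss_cov.cov (scaled_resid e) \<eta>)"
  unfolding cov_scaled_resid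
proof (rule Pe.integrable_const_bound[where B="\<gamma> * \<gamma>"])
  show "AE e in Pe. norm (\<integral>w. resid \<rho> \<gamma> e (\<sigma> * fst w) *
      resid \<rho> \<gamma> e (\<sigma> * (\<eta> * fst w + sqrt (1 - \<eta>\<^sup>2) * snd w)) \<partial>N2) \<le> \<gamma> * \<gamma>"
    by (intro AE_I2) (simp add: abs_integral_le_prob[OF N2.P.prob_space_axioms] abs_resid_mult_le)
qed measurable

definition numer :: "real \<Rightarrow> real" where
  "numer \<eta> = (\<integral>w. (case w of (g, z, e) \<Rightarrow>
      resid \<rho> \<gamma> e (\<sigma> * g) * resid \<rho> \<gamma> e (\<sigma> * (\<eta> * g + sqrt (1 - \<eta>\<^sup>2) * z))) \<partial>(stdN \<Otimes>\<^sub>M (stdN \<Otimes>\<^sub>M Pe)))"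

definition denom :: real where
  "denom = (\<integral>w. (case w of (g, e) \<Rightarrow> (resid \<rho> \<gamma> e (\<sigma> * g))\<^sup>2) \<partial>(stdN \<Otimes>\<^sub>M Pe))"

lemma Ffun_eq: "Ffun Pe \<rho> q \<sigma> \<gamma> \<eta> = q * numer \<eta> / denom"
  unfolding Ffun_def numer_def denom_def by simp

lemma denom_eq: "denom = \<sigma>\<^sup>2 / (q * \<delta>)"
  using system unfolding sys_holds_def denom_def by simp

lemma denom_pos: "0 < denom"
  using \<sigma>_pos q\<delta>_pos by (simp add: denom_eq)

lemma numer_eq: "numer \<eta> = (\<integral>e. gauss_cov.cov (scaled_resid e) \<eta> \<partial>Pe)"
  unfolding numer_def cov_scaled_resid
  by (rule integral_stdN_stdN_pair[OF prob_space_Pe, where K="\<gamma> * \<gamma>"]) (measurable, rule abs_resid_mult_le)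

text \<open>Since \<open>E[G \<cdot> \<sigma>G] = \<sigma>\<close>, the second equation of the system says
  \<open>\<sigma> E[G r(\<sigma>G)] = \<sigma>\<^sup>2 / (q\<delta>)\<close>, which is the denominator by the first equation.\<close>

lemma integrable_gauss_times_resid:
  "integrable (stdN \<Otimes>\<^sub>M Pe) (\<lambda>(g, e). g * resid \<rho> \<gamma> e (\<sigma> * g))"
proof (rule Bochner_Integration.integrable_bound[where f="\<lambda>w. \<gamma> * \<bar>fst w\<bar>"])
  show "integrable (stdN \<Otimes>\<^sub>M Pe) (\<lambda>w. \<gamma> * \<bar>fst w\<bar>)"
    using integrable_stdN_pair_fst[OF prob_space_Pe _ integrable_stdN_abs] by simp
  show "AE w in stdN \<Otimes>\<^sub>M Pe. norm (case w of (g, e) \<Rightarrow> g * resid \<rho> \<gamma> e (\<sigma> * g)) \<le> norm (\<gamma> * \<bar>fst w\<bar>)"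
  proof (intro AE_I2)
    fix w :: "real \<times> real"
    have "\<bar>fst w\<bar> * \<bar>resid \<rho> \<gamma> (snd w) (\<sigma> * fst w)\<bar> \<le> \<bar>fst w\<bar> * \<gamma>"
      by (intro mult_left_mono abs_resid_le) auto
    then show "norm (case w of (g, e) \<Rightarrow> g * resid \<rho> \<gamma> e (\<sigma> * g)) \<le> norm (\<gamma> * \<bar>fst w\<bar>)"
      using \<gamma>_pos by (simp add: case_prod_unfold abs_mult mult.commute)
  qed
qed measurable

lemma
  shows integrable_stein_moment: "integrable Pe (\<lambda>e. \<integral>x. x * scaled_resid e x \<partial>stdN)"
    and integral_stein_moment: "\<sigma> * (\<integral>e. (\<integral>x. x * scaled_resid e x \<partial>stdN) \<partial>Pe) = denom"
proof -
  show "integrable Pe (\<lambda>e. \<integral>x. x * scaled_resid e x \<partial>stdN)"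
    using SP.integrable_snd[OF integrable_gauss_times_resid] unfolding scaled_resid_def by simp
  have moment: "(\<integral>e. (\<integral>x. x * scaled_resid e x \<partial>stdN) \<partial>Pe)
      = (\<integral>w. (case w of (g, e) \<Rightarrow> g * resid \<rho> \<gamma> e (\<sigma> * g)) \<partial>(stdN \<Otimes>\<^sub>M Pe))"
    unfolding scaled_resid_def using SP.integral_snd[OF integrable_gauss_times_resid] by simp
  have "(\<integral>w. (case w of (g, e) \<Rightarrow> g * prox (\<lambda>u. \<gamma> * rho_e \<rho> e u) (\<sigma> * g)) \<partial>(stdN \<Otimes>\<^sub>M Pe))
      = (\<integral>w. \<sigma> * (fst w)\<^sup>2 - (case w of (g, e) \<Rightarrow> g * resid \<rho> \<gamma> e (\<sigma> * g)) \<partial>(stdN \<Otimes>\<^sub>M Pe))"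
    by (intro Bochner_Integration.integral_cong refl) (auto simp: resid_def power2_eq_square algebra_simps)
  also have "\<dots> = \<sigma> - (\<integral>e. (\<integral>x. x * scaled_resid e x \<partial>stdN) \<partial>Pe)"
    using integrable_stdN_pair_fst[OF prob_space_Pe _ integrable_stdN_power2]
      integral_stdN_pair_fst[OF prob_space_Pe _ integrable_stdN_power2]
      integrable_gauss_times_resid integral_stdN_power2 moment
    by simp
  finally have "1 - 1 / (q * \<delta>) = (1 / \<sigma>) * (\<sigma> - (\<integral>e. (\<integral>x. x * scaled_resid e x \<partial>stdN) \<partial>Pe))"
    using system unfolding sys_holds_def by simp
  then show "\<sigma> * (\<integral>e. (\<integral>x. x * scaled_resid e x \<partial>stdN) \<partial>Pe) = denom"
    using \<sigma>_pos q\<delta>_pos by (simp add: denom_eq field_simps power2_eq_square)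
qed

lemma numer_increment:
  assumes ab: "-1 \<le> a" "a \<le> b" "b \<le> 1"
  shows numer_mono: "numer a \<le> numer b"
    and numer_increment_le: "numer b - numer a \<le> (b - a) * denom"
proof -
  have diff: "numer b - numer a = (\<integral>e. gauss_cov.cov (scaled_resid e) b - gauss_cov.cov (scaled_resid e) a \<partial>Pe)"
    unfolding numer_eq using integrable_cov_scaled_resid by simp
  have "0 \<le> (\<integral>e. gauss_cov.cov (scaled_resid e) b - gauss_cov.cov (scaled_resid e) a \<partial>Pe)"
    using gauss_cov.cov_mono[OF gauss_cov_scaled_resid ab] by (intro Bochner_Integration.integral_nonneg) simp
  then show "numer a \<le> numer b" using diff by simp
  have "(\<integral>e. gauss_cov.cov (scaled_resid e) b - gauss_cov.cov (scaled_resid e) a \<partial>Pe)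
      \<le> (\<integral>e. (b - a) * (\<sigma> * (\<integral>x. x * scaled_resid e x \<partial>stdN)) \<partial>Pe)"
  proof (rule integral_mono)
    fix e
    have "gauss_cov.cov (scaled_resid e) b - gauss_cov.cov (scaled_resid e) a
        \<le> (b - a) * gauss_cov.rot_dcov (\<lambda>x. resid_slope e (\<sigma> * x) * \<sigma>) 0"
      by (rule gauss_cov.cov_increment_le[OF gauss_cov_scaled_resid ab])
    also have "\<dots> \<le> (b - a) * (\<sigma> * (\<integral>x. x * scaled_resid e x \<partial>stdN))"
      using gauss_cov.rot_dcov_zero_le[OF gauss_cov_scaled_resid, of e] ab by (intro mult_left_mono) auto
    finally show "gauss_cov.cov (scaled_resid e) b - gauss_cov.cov (scaled_resid e) a
        \<le> (b - a) * (\<sigma> * (\<integral>x. x * scaled_resid e x \<partial>stdN))" .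
  qed (use integrable_cov_scaled_resid integrable_stein_moment in simp_all)
  also have "\<dots> = (b - a) * denom"
    using integral_stein_moment by simp
  finally show "numer b - numer a \<le> (b - a) * denom" using diff by simp
qed

lemma numer_one: "numer 1 = denom"
proof -
  have "gauss_cov.cov (scaled_resid e) 1 = (\<integral>x. (resid \<rho> \<gamma> e (\<sigma> * x))\<^sup>2 \<partial>stdN)" for e
    unfolding cov_scaled_resid by (subst integral_N2_fst[symmetric]) (measurable, simp add: power2_eq_square)
  moreover have "resid \<rho> \<gamma> e x * resid \<rho> \<gamma> e x \<le> \<gamma> * \<gamma>" for e x
    using abs_resid_mult_le[of e x e x] by simp
  then have "integrable (stdN \<Otimes>\<^sub>M Pe) (\<lambda>(g, e). (resid \<rho> \<gamma> e (\<sigma> * g))\<^sup>2)"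
    by (intro SP.P.integrable_const_bound[where B="\<gamma> * \<gamma>"])
      (auto intro!: AE_I2 simp: case_prod_unfold power2_eq_square)
  ultimately show ?thesis
    unfolding numer_eq denom_def using SP.integral_snd[of "\<lambda>g e. (resid \<rho> \<gamma> e (\<sigma> * g))\<^sup>2"] by simp
qed

lemma numer_zero_nonneg: "0 \<le> numer 0"
  unfolding numer_eq
  using gauss_cov.cov_zero_nonneg[OF gauss_cov_scaled_resid] by (intro Bochner_Integration.integral_nonneg) simp

lemma Ffun_increment:
  assumes "-1 \<le> a" "a \<le> b" "b \<le> 1"
  shows "Ffun Pe \<rho> q \<sigma> \<gamma> a \<le> Ffun Pe \<rho> q \<sigma> \<gamma> b \<and> Ffun Pe \<rho> q \<sigma> \<gamma> b - Ffun Pe \<rho> q \<sigma> \<gamma> a \<le> q * (b - a)"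
proof
  show "Ffun Pe \<rho> q \<sigma> \<gamma> a \<le> Ffun Pe \<rho> q \<sigma> \<gamma> b"
    unfolding Ffun_eq using numer_mono[OF assms] q_pos denom_pos
    by (intro divide_right_mono mult_left_mono) auto
  have "(numer b - numer a) / denom \<le> b - a"
    using numer_increment_le[OF assms] denom_pos by (simp add: divide_le_eq)
  then have "q * ((numer b - numer a) / denom) \<le> q * (b - a)"
    using q_pos by (intro mult_left_mono) auto
  then show "Ffun Pe \<rho> q \<sigma> \<gamma> b - Ffun Pe \<rho> q \<sigma> \<gamma> a \<le> q * (b - a)"
    unfolding Ffun_eq using denom_pos by (simp add: field_simps)
qed

lemma Ffun_one: "Ffun Pe \<rho> q \<sigma> \<gamma> 1 = q"
  unfolding Ffun_eq numer_one using denom_pos by simp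

lemma Ffun_zero_nonneg: "0 \<le> Ffun Pe \<rho> q \<sigma> \<gamma> 0"
  unfolding Ffun_eq using numer_zero_nonneg q_pos denom_pos by simp

end

section \<open>Fixed points\<close>

context
  fixes F :: "real \<Rightarrow> real" and q :: real
  assumes increment: "\<And>a b. -1 \<le> a \<Longrightarrow> a \<le> b \<Longrightarrow> b \<le> 1 \<Longrightarrow> F a \<le> F b \<and> F b - F a \<le> q * (b - a)"
begin

lemma mono_on_of_increment: "mono_on {-1..1} F"
  by (rule mono_onI) (use increment in auto)

lemma lipschitz_of_increment:
  assumes "x \<in> {-1..1}" "y \<in> {-1..1}"
  shows "\<bar>F x - F y\<bar> \<le> q * \<bar>x - y\<bar>"
  using increment[of x y] increment[of y x] assms by (cases "x \<le> y") (auto simp: abs_if)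

lemma ex1_fixed_point_of_increment:
  assumes q: "q < 1" and F0: "0 \<le> F 0" and F1: "F 1 = q"
  shows "\<exists>!\<eta>. \<eta> \<in> {-1..1} \<and> F \<eta> = \<eta>"
proof -
  have "continuous_on {-1..1} F"
    using lipschitz_of_increment q increment[of 0 1] F0 F1
    by (intro lipschitz_on_continuous_on[where L=q] lipschitz_onI) (auto simp: dist_real_def)
  moreover have "F 1 - 1 \<le> 0" "0 \<le> F (-1) - (-1)"
    using F0 F1 q increment[of "-1" 0] by auto
  ultimately obtain \<eta> where \<eta>: "\<eta> \<in> {-1..1}" "F \<eta> = \<eta>"
    using IVT2'[of "\<lambda>x. F x - x" 1 0 "-1"] by (force intro!: continuous_intros)
  show ?thesis
  proof (rule ex1I[of _ \<eta>])
    show "\<eta>' = \<eta>" if "\<eta>' \<in> {-1..1} \<and> F \<eta>' = \<eta>'" for \<eta>'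
    proof -
      have "\<bar>\<eta>' - \<eta>\<bar> \<le> q * \<bar>\<eta>' - \<eta>\<bar>"
        using lipschitz_of_increment[of \<eta>' \<eta>] that \<eta> by simp
      then have "(1 - q) * \<bar>\<eta>' - \<eta>\<bar> \<le> 0" by (simp add: algebra_simps)
      then show ?thesis using q by (simp add: mult_le_0_iff)
    qed
  qed (use \<eta> in simp)
qed

lemma fixed_point_mem:
  assumes q: "q < 1" and F0: "0 \<le> F 0" and F1: "F 1 = q" and \<eta>: "\<eta> \<in> {-1..1}" "F \<eta> = \<eta>"
  shows "\<eta> \<in> {0..q}"
  unfolding atLeastAtMost_iff
proof
  show "\<eta> \<le> q" using increment[of \<eta> 1] \<eta> F1 by auto
  show "0 \<le> \<eta>"
  proof (rule ccontr)
    assume "\<not> 0 \<le> \<eta>"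
    then have "F 0 - \<eta> \<le> q * (0 - \<eta>)" using increment[of \<eta> 0] \<eta> by auto
    with F0 have "0 \<le> (1 - q) * \<eta>" by (simp add: algebra_simps)
    with q \<open>\<not> 0 \<le> \<eta>\<close> show False by (simp add: zero_le_mult_iff)
  qed
qed

end

theorem mainTheorem1:
  fixes q \<delta> \<sigma> \<gamma> :: real and \<rho> :: "real \<Rightarrow> real" and Pe :: "real measure"
  assumes q: "0 < q" "q < 1" and \<delta>: "1 < \<delta>" "1 < q * \<delta>"
    and \<rho>_C2: "\<forall>t. \<rho> differentiable (at t)" "\<forall>t. deriv \<rho> differentiable (at t)"
        "continuous_on UNIV (deriv (deriv \<rho>))"
    and \<rho>_argmin: "{x. \<forall>y. \<rho> x \<le> \<rho> y} = {0}"
    and \<rho>_d1: "\<forall>t. \<bar>deriv \<rho> t\<bar> \<le> 1"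
    and \<rho>_d2: "\<forall>t. 0 < deriv (deriv \<rho>) t \<and> deriv (deriv \<rho>) t \<le> 1"
    and Pe: "prob_space Pe" "sets Pe = sets borel" "measure Pe (UNIV - {0}) > 0"
    and sg: "0 < \<sigma>" "0 < \<gamma>" "sys_holds Pe \<rho> q \<delta> \<sigma> \<gamma>"
    and uniq: "\<forall>s g. 0 < s \<and> 0 < g \<and> sys_holds Pe \<rho> q \<delta> s g \<longrightarrow> s = \<sigma> \<and> g = \<gamma>"
  shows "mono_on {-1..1} (Ffun Pe \<rho> q \<sigma> \<gamma>)
    \<and> (\<forall>x\<in>{-1..1}. \<forall>y\<in>{-1..1}. \<bar>Ffun Pe \<rho> q \<sigma> \<gamma> x - Ffun Pe \<rho> q \<sigma> \<gamma> y\<bar> \<le> q * \<bar>x - y\<bar>)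
    \<and> 0 \<le> Ffun Pe \<rho> q \<sigma> \<gamma> 0 \<and> Ffun Pe \<rho> q \<sigma> \<gamma> 0 \<le> q \<and> q \<le> 1
    \<and> Ffun Pe \<rho> q \<sigma> \<gamma> 1 = q
    \<and> (\<exists>!\<eta>. \<eta> \<in> {-1..1} \<and> Ffun Pe \<rho> q \<sigma> \<gamma> \<eta> = \<eta>)
    \<and> (\<forall>\<eta>\<in>{-1..1}. Ffun Pe \<rho> q \<sigma> \<gamma> \<eta> = \<eta> \<longrightarrow> \<eta> \<in> {0..q})"
proof -
  interpret prox_system \<rho> \<gamma> Pe q \<delta> \<sigma>
    using \<rho>_C2 \<rho>_d1 \<rho>_d2 Pe(1,2) sg q(1) \<delta>(2)
    by (intro prox_system.intro prox_residual.intro prox_system_axioms.intro) simp_all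
  note increment = Ffun_increment and F0 = Ffun_zero_nonneg and F1 = Ffun_one
  show ?thesis
  proof (intro conjI)
    show "mono_on {-1..1} (Ffun Pe \<rho> q \<sigma> \<gamma>)"
      by (rule mono_on_of_increment[OF increment])
    show "\<forall>x\<in>{-1..1}. \<forall>y\<in>{-1..1}. \<bar>Ffun Pe \<rho> q \<sigma> \<gamma> x - Ffun Pe \<rho> q \<sigma> \<gamma> y\<bar> \<le> q * \<bar>x - y\<bar>"
      using lipschitz_of_increment[OF increment] by blast
    show "Ffun Pe \<rho> q \<sigma> \<gamma> 0 \<le> q"
      using increment[of 0 1] F1 by simp
    show "\<exists>!\<eta>. \<eta> \<in> {-1..1} \<and> Ffun Pe \<rho> q \<sigma> \<gamma> \<eta> = \<eta>"
      by (rule ex1_fixed_point_of_increment[OF increment q(2) F0 F1])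
    show "\<forall>\<eta>\<in>{-1..1}. Ffun Pe \<rho> q \<sigma> \<gamma> \<eta> = \<eta> \<longrightarrow> \<eta> \<in> {0..q}"
      using fixed_point_mem[OF increment q(2) F0 F1] by blast
  qed (use q F0 F1 in auto)
qed

end
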